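(* Let $r_2\geq 3$ be an odd integer. Then there is no graph with parameters $(r_2,r_3)$ for any integer $r_3$ with $\binom{r_2-1}{2}<r_3<\binom{r_2}{2}$. Moreover, $K_{r_2+1}$ has parameters $(r_2,\binom{r_2}{2})$ and $K_{r_2}\square K_2$ has parameters $(r_2,\binom{r_2-1}{2})$.
   Context: All graphs are finite, simple and undirected. The $K_3$-degree of a vertex $v$ is the number of triangles containing $v$. A graph $G$ has parameters $(r_2,r_3)$ if every vertex has degree $r_2$ and every vertex has $K_3$-degree $r_3$. $K_n$ is the complete graph on $n$ vertices. The Cartesian product $G_1\square G_2$ has vertex set $V(G_1)\times V(G_2)$, with $(u,v)$ and $(u',v')$ adjacent iff either $u=u'$ and $vv'\in E(G_2)$, or $v=v'$ and $uu'\in E(G_1)$. *)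

theory Defs
  imports Main
begin

definition simple_graph :: "'a set \<Rightarrow> 'a set set \<Rightarrow> bool" where
  "simple_graph V E \<longleftrightarrow> finite V \<and> (\<forall>e\<in>E. e \<subseteq> V \<and> card e = 2)"

definition degree :: "'a set \<Rightarrow> 'a set set \<Rightarrow> 'a \<Rightarrow> nat" where
  "degree V E v = card {u \<in> V. {u, v} \<in> E}"

definition triangles :: "'a set \<Rightarrow> 'a set set \<Rightarrow> 'a set set" where
  "triangles V E = {T. T \<subseteq> V \<and> card T = 3 \<and> (\<forall>x\<in>T. \<forall>y\<in>T. x \<noteq> y \<longrightarrow> {x, y} \<in> E)}"

definition K3_degree :: "'a set \<Rightarrow> 'a set set \<Rightarrow> 'a \<Rightarrow> nat" where
  "K3_degree V E v = card {T \<in> triangles V E. v \<in> T}"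

definition has_params :: "'a set \<Rightarrow> 'a set set \<Rightarrow> nat \<Rightarrow> nat \<Rightarrow> bool" where
  "has_params V E r2 r3 \<longleftrightarrow> simple_graph V E \<and>
     (\<forall>v\<in>V. degree V E v = r2 \<and> K3_degree V E v = r3)"

definition complete_graph_V :: "nat \<Rightarrow> nat set" where
  "complete_graph_V n = {0..<n}"

definition complete_graph_E :: "nat \<Rightarrow> nat set set" where
  "complete_graph_E n = {{i, j} | i j. i < n \<and> j < n \<and> i \<noteq> j}"

definition cart_V :: "'a set \<Rightarrow> 'b set \<Rightarrow> ('a \<times> 'b) set" where
  "cart_V V1 V2 = V1 \<times> V2"

definition cart_E :: "'a set \<Rightarrow> 'a set set \<Rightarrow> 'b set \<Rightarrow> 'b set set \<Rightarrow> ('a \<times> 'b) set set" where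
  "cart_E V1 E1 V2 E2 =
     {{(u, v), (u, v')} | u v v'. u \<in> V1 \<and> {v, v'} \<in> E2} \<union>
     {{(u, v), (u', v)} | u u' v. v \<in> V2 \<and> {u, u'} \<in> E1}"

end

theory Submission
  imports Defs
begin

text \<open>For a vertex \<open>v\<close> and a neighbour \<open>x\<close> let \<open>k(v,x)\<close> (\<open>link_nondegree V E v x\<close>) be
  the number of neighbours of \<open>v\<close> other than \<open>x\<close> that are not adjacent to \<open>x\<close>. Counting
  pairs of neighbours of \<open>v\<close> gives \<open>\<Sum>\<^sub>x k(v,x) = d(d-1) - 2r\<^sub>3 = M\<close> at every vertex of
  a graph with parameters \<open>(d,r\<^sub>3)\<close>, and the bounds on \<open>r\<^sub>3\<close> say exactly that \<open>M\<close> is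
  even with \<open>0 < M < 2(d-1)\<close>. Double counting non-adjacent pairs in \<open>N(v) \<union> N(x)\<close> yields
  \<open>k(v,x) (|N(v) \<inter> N(x)| + 2) \<le> M\<close>, which forces \<open>k \<le> 1\<close> everywhere. A short local
  argument then shows that \<open>k(v,-)\<close> is constant on \<open>N(v)\<close>, so \<open>M = d k\<close> is \<open>0\<close> or the odd
  number \<open>d\<close>, a contradiction.\<close>

definition neighbours :: "'a set \<Rightarrow> 'a set set \<Rightarrow> 'a \<Rightarrow> 'a set" where
  "neighbours V E v = {u \<in> V. {u, v} \<in> E}"

definition non_neighbours_in :: "'a set set \<Rightarrow> 'a set \<Rightarrow> 'a \<Rightarrow> 'a set" where
  "non_neighbours_in E S y = {z \<in> S. z \<noteq> y \<and> {y, z} \<notin> E}"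

definition link_nondegree :: "'a set \<Rightarrow> 'a set set \<Rightarrow> 'a \<Rightarrow> 'a \<Rightarrow> nat" where
  "link_nondegree V E v y = card (non_neighbours_in E (neighbours V E v) y)"

lemma degree_eq_card_neighbours: "degree V E v = card (neighbours V E v)"
  unfolding degree_def neighbours_def ..

lemma mem_neighbours_iff: "u \<in> neighbours V E v \<longleftrightarrow> u \<in> V \<and> {u, v} \<in> E"
  unfolding neighbours_def by simp

lemma neighbours_sym: "u \<in> neighbours V E v \<Longrightarrow> v \<in> V \<Longrightarrow> v \<in> neighbours V E u"
  by (simp add: mem_neighbours_iff insert_commute)

lemma simple_graph_edgeD:
  assumes "simple_graph V E" "{a, b} \<in> E"
  shows "a \<noteq> b" "a \<in> V" "b \<in> V"
proof -
  have "{a, b} \<subseteq> V \<and> card {a, b} = 2"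
    using assms unfolding simple_graph_def by blast
  then show "a \<noteq> b" "a \<in> V" "b \<in> V"
    by (auto split: if_splits)
qed

lemma finite_neighbours: "simple_graph V E \<Longrightarrow> finite (neighbours V E v)"
  unfolding simple_graph_def neighbours_def by auto

lemma not_mem_neighbours_self: "simple_graph V E \<Longrightarrow> v \<notin> neighbours V E v"
  using simple_graph_edgeD(1)[of V E v v] by (auto simp: mem_neighbours_iff)

lemma card_neighbours_Int_add_non_neighbours_in:
  assumes sg: "simple_graph V E" and "finite S" "S \<subseteq> V"
  shows "card (S \<inter> neighbours V E y) + card (non_neighbours_in E S y) = card (S - {y})"
proof -
  have "S - {y} = (S \<inter> neighbours V E y) \<union> non_neighbours_in E S y"
    using \<open>S \<subseteq> V\<close> not_mem_neighbours_self[OF sg, of y]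
    by (auto simp: non_neighbours_in_def mem_neighbours_iff insert_commute)
  moreover have "(S \<inter> neighbours V E y) \<inter> non_neighbours_in E S y = {}"
    by (auto simp: non_neighbours_in_def mem_neighbours_iff insert_commute)
  ultimately show ?thesis
    using \<open>finite S\<close> by (simp add: card_Un_disjoint non_neighbours_in_def)
qed

lemma card_neighbours_eq_Suc:
  assumes sg: "simple_graph V E" and y: "y \<in> neighbours V E v"
  shows "card (neighbours V E v)
           = Suc (card (neighbours V E v \<inter> neighbours V E y) + link_nondegree V E v y)"
proof -
  have "card (neighbours V E v) = Suc (card (neighbours V E v - {y}))"
    using y finite_neighbours[OF sg] by (metis card_Suc_Diff1)
  then show ?thesis
    using card_neighbours_Int_add_non_neighbours_in[OF sg finite_neighbours[OF sg], of v y]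
    by (simp add: link_nondegree_def neighbours_def)
qed

lemma link_nondegree_sym:
  assumes sg: "simple_graph V E" and v: "v \<in> V" and x: "x \<in> neighbours V E v"
    and deg: "degree V E x = degree V E v"
  shows "link_nondegree V E x v = link_nondegree V E v x"
  using card_neighbours_eq_Suc[OF sg x] card_neighbours_eq_Suc[OF sg neighbours_sym[OF x v]] deg
  by (simp add: degree_eq_card_neighbours Int_commute)

lemma card_eq_twice_card_image:
  assumes "finite A" and fibre: "\<And>a. a \<in> A \<Longrightarrow> card {b \<in> A. f b = f a} = 2"
  shows "card A = 2 * card (f ` A)"
proof -
  have "card A = (\<Sum>c\<in>f ` A. card {b \<in> A. f b = c})"
    using sum.image_gen[OF \<open>finite A\<close>, of "\<lambda>_. 1::nat" f] by simp
  also have "\<dots> = (\<Sum>c\<in>f ` A. 2)"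
    using fibre by (intro sum.cong) auto
  finally show ?thesis by simp
qed

lemma mem_common_neighbours_iff:
  assumes "simple_graph V E"
  shows "y \<in> neighbours V E v \<and> z \<in> neighbours V E v \<inter> neighbours V E y
           \<longleftrightarrow> y \<in> V \<and> z \<in> V \<and> y \<noteq> z \<and> {y, v} \<in> E \<and> {z, v} \<in> E \<and> {y, z} \<in> E"
  using not_mem_neighbours_self[OF assms, of y] by (auto simp: mem_neighbours_iff insert_commute)

lemma triangles_containing_eq_image:
  assumes sg: "simple_graph V E" and v: "v \<in> V"
  shows "{T \<in> triangles V E. v \<in> T}
           = (\<lambda>(y, z). {v, y, z}) ` (SIGMA y:neighbours V E v. neighbours V E v \<inter> neighbours V E y)"
    (is "_ = ?f ` ?P")
proof (intro equalityI subsetI)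
  fix T assume T: "T \<in> {T \<in> triangles V E. v \<in> T}"
  then have "card (T - {v}) = 2"
    by (simp add: triangles_def card_Diff_singleton)
  then obtain y z where yz: "T - {v} = {y, z}" "y \<noteq> z"
    by (auto simp: card_2_iff)
  then have "y \<in> T - {v}" "z \<in> T - {v}"
    by auto
  then have "y \<in> neighbours V E v \<and> z \<in> neighbours V E v \<inter> neighbours V E y"
    using T yz(2) unfolding mem_common_neighbours_iff[OF sg] triangles_def
    by (auto simp: insert_commute)
  moreover have "T = {v, y, z}"
    using T yz by auto
  ultimately show "T \<in> ?f ` ?P"
    by force
next
  fix T assume "T \<in> ?f ` ?P"
  then obtain y z where yz: "y \<in> neighbours V E v \<and> z \<in> neighbours V E v \<inter> neighbours V E y"
    and T: "T = {v, y, z}"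
    by auto
  moreover have "y \<noteq> v" "z \<noteq> v"
    using yz not_mem_neighbours_self[OF sg, of v] by auto
  ultimately show "T \<in> {T \<in> triangles V E. v \<in> T}"
    using v unfolding mem_common_neighbours_iff[OF sg]
    by (auto simp: triangles_def insert_commute card_insert_if)
qed

text \<open>Each triangle through \<open>v\<close> arises from exactly two ordered pairs of adjacent neighbours.\<close>
lemma two_K3_degree_eq_sum_card_common_neighbours:
  assumes sg: "simple_graph V E" and v: "v \<in> V"
  shows "2 * K3_degree V E v
           = (\<Sum>y\<in>neighbours V E v. card (neighbours V E v \<inter> neighbours V E y))"
proof -
  let ?N = "neighbours V E v"
  define P where "P = (SIGMA y:?N. ?N \<inter> neighbours V E y)"
  define f where "f = (\<lambda>(y, z). {v, y, z})"
  have finite_N: "finite ?N" and v_notin_N: "v \<notin> ?N"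
    using finite_neighbours[OF sg] not_mem_neighbours_self[OF sg] by auto
  have P_iff: "(y, z) \<in> P
      \<longleftrightarrow> y \<in> V \<and> z \<in> V \<and> y \<noteq> z \<and> {y, v} \<in> E \<and> {z, v} \<in> E \<and> {y, z} \<in> E" for y z
    using mem_common_neighbours_iff[OF sg] by (simp add: P_def)
  have "card P = 2 * card (f ` P)"
  proof (rule card_eq_twice_card_image)
    show "finite P"
      unfolding P_def using finite_N by auto
    fix p assume "p \<in> P"
    then obtain y z where p: "p = (y, z)" and yz: "(y, z) \<in> P"
      by (cases p) auto
    have "{q \<in> P. f q = f p} = {(y, z), (z, y)}"
    proof (intro equalityI subsetI)
      fix q assume "q \<in> {q \<in> P. f q = f p}"
      then obtain a b where q: "q = (a, b)" "(a, b) \<in> P" "{v, a, b} = {v, y, z}"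
        by (cases q) (auto simp: f_def p)
      have "{a, b} = {v, a, b} - {v}" and "{y, z} = {v, y, z} - {v}"
        using q(2) yz v_notin_N by (auto simp: P_def)
      then have "{a, b} = {y, z}"
        using q(3) by simp
      then show "q \<in> {(y, z), (z, y)}"
        using q(1) by (auto simp: doubleton_eq_iff)
    qed (use yz in \<open>auto simp: P_iff f_def p insert_commute\<close>)
    then show "card {q \<in> P. f q = f p} = 2"
      using yz by (simp add: P_iff)
  qed
  moreover have "card P = (\<Sum>y\<in>?N. card (?N \<inter> neighbours V E y))"
    unfolding P_def using finite_N by (simp add: card_SigmaI)
  ultimately show ?thesis
    unfolding K3_degree_def triangles_containing_eq_image[OF sg v] P_def f_def by simp
qed

lemma sum_link_nondegree_add_K3_degree:
  assumes sg: "simple_graph V E" and v: "v \<in> V"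
  shows "(\<Sum>y\<in>neighbours V E v. link_nondegree V E v y) + 2 * K3_degree V E v
           = degree V E v * (degree V E v - 1)"
proof -
  let ?N = "neighbours V E v"
  have "(\<Sum>y\<in>?N. link_nondegree V E v y) + 2 * K3_degree V E v
          = (\<Sum>y\<in>?N. link_nondegree V E v y + card (?N \<inter> neighbours V E y))"
    using two_K3_degree_eq_sum_card_common_neighbours[OF sg v] by (simp add: sum.distrib)
  also have "\<dots> = (\<Sum>y\<in>?N. degree V E v - 1)"
    using card_neighbours_eq_Suc[OF sg] by (intro sum.cong) (simp_all add: degree_eq_card_neighbours)
  also have "\<dots> = degree V E v * (degree V E v - 1)"
    by (simp add: degree_eq_card_neighbours)
  finally show ?thesis .
qed

lemma sum_card_non_neighbours_in_Un:
  assumes "finite X" "finite Y" "X \<inter> Y = {}"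
  shows "(\<Sum>y\<in>X \<union> Y. card (non_neighbours_in E (X \<union> Y) y))
           = (\<Sum>y\<in>X. card (non_neighbours_in E X y)) + (\<Sum>y\<in>Y. card (non_neighbours_in E Y y))
             + 2 * (\<Sum>y\<in>X. card (non_neighbours_in E Y y))"
proof -
  have split: "card (non_neighbours_in E (X \<union> Y) y)
                 = card (non_neighbours_in E X y) + card (non_neighbours_in E Y y)" for y
  proof -
    have "non_neighbours_in E (X \<union> Y) y = non_neighbours_in E X y \<union> non_neighbours_in E Y y"
      by (auto simp: non_neighbours_in_def)
    then show ?thesis
      using assms by (simp add: card_Un_disjoint non_neighbours_in_def disjoint_iff)
  qed
  have "(\<Sum>y\<in>Y. card (non_neighbours_in E X y))
      = (\<Sum>y\<in>Y. \<Sum>x\<in>{x \<in> X. {y, x} \<notin> E}. 1::nat)"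
    using assms(3)
    by (intro sum.cong) (auto simp: non_neighbours_in_def intro!: arg_cong[where f = card])
  also have "\<dots> = (\<Sum>x\<in>X. \<Sum>y\<in>{y \<in> Y. {y, x} \<notin> E}. 1)"
    by (rule sum.swap_restrict[OF assms(2,1)])
  also have "\<dots> = (\<Sum>x\<in>X. card (non_neighbours_in E Y x))"
    using assms(3)
    by (intro sum.cong)
      (auto simp: non_neighbours_in_def insert_commute intro!: arg_cong[where f = card])
  finally have swap: "(\<Sum>y\<in>Y. card (non_neighbours_in E X y))
      = (\<Sum>x\<in>X. card (non_neighbours_in E Y x))" .
  show ?thesis
    using assms swap by (simp add: sum.union_disjoint split sum.distrib)
qed

lemma sum_link_nondegree_lower_bound:
  assumes sg: "simple_graph V E" and x: "x \<in> neighbours V E v"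
  defines "W \<equiv> neighbours V E v \<inter> neighbours V E x"
    and "A \<equiv> non_neighbours_in E (neighbours V E v) x"
  shows "2 * card A + (\<Sum>w\<in>W. card (non_neighbours_in E W w))
           + 2 * (\<Sum>w\<in>W. card (non_neighbours_in E A w))
         \<le> (\<Sum>y\<in>neighbours V E v. link_nondegree V E v y)"
proof -
  have N: "neighbours V E v = W \<union> ({x} \<union> A)"
    using x by (auto simp: W_def A_def non_neighbours_in_def mem_neighbours_iff insert_commute)
  have disj: "W \<inter> ({x} \<union> A) = {}" "{x} \<inter> A = {}"
    using not_mem_neighbours_self[OF sg, of x]
    by (auto simp: W_def A_def non_neighbours_in_def mem_neighbours_iff insert_commute)
  have fin: "finite W" "finite A"
    using finite_neighbours[OF sg, of v] by (auto simp: W_def A_def non_neighbours_in_def)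
  have "non_neighbours_in E A x = A"
    by (auto simp: A_def non_neighbours_in_def)
  then have "2 * card A \<le> (\<Sum>y\<in>{x} \<union> A. card (non_neighbours_in E ({x} \<union> A) y))"
    using sum_card_non_neighbours_in_Un[of "{x}" A E] fin disj by simp
  moreover have "(\<Sum>w\<in>W. card (non_neighbours_in E A w))
                   \<le> (\<Sum>w\<in>W. card (non_neighbours_in E ({x} \<union> A) w))"
    using fin by (intro sum_mono card_mono) (auto simp: non_neighbours_in_def)
  moreover have "(\<Sum>y\<in>neighbours V E v. link_nondegree V E v y)
      = (\<Sum>w\<in>W. card (non_neighbours_in E W w))
        + (\<Sum>y\<in>{x} \<union> A. card (non_neighbours_in E ({x} \<union> A) y))
        + 2 * (\<Sum>w\<in>W. card (non_neighbours_in E ({x} \<union> A) w))"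
    unfolding link_nondegree_def N
    using sum_card_non_neighbours_in_Un[of W "{x} \<union> A" E] fin disj by simp
  ultimately show ?thesis
    by linarith
qed

lemma non_neighbours_in_Un_neighbours_subset:
  assumes w: "w \<in> neighbours V E v \<inter> neighbours V E x"
  shows "non_neighbours_in E (neighbours V E v \<union> neighbours V E x) w
           \<subseteq> non_neighbours_in E (neighbours V E v \<inter> neighbours V E x) w
             \<union> non_neighbours_in E (non_neighbours_in E (neighbours V E v) x) w
             \<union> non_neighbours_in E (non_neighbours_in E (neighbours V E x) v) w"
proof
  fix z assume z: "z \<in> non_neighbours_in E (neighbours V E v \<union> neighbours V E x) w"
  have "{v, w} \<in> E" "{x, w} \<in> E"
    using w by (auto simp: mem_neighbours_iff insert_commute)
  then have "z \<noteq> v" "z \<noteq> x"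
    using z by (auto simp: non_neighbours_in_def insert_commute)
  then show "z \<in> non_neighbours_in E (neighbours V E v \<inter> neighbours V E x) w
             \<union> non_neighbours_in E (non_neighbours_in E (neighbours V E v) x) w
             \<union> non_neighbours_in E (non_neighbours_in E (neighbours V E x) v) w"
    using z by (auto simp: non_neighbours_in_def mem_neighbours_iff insert_commute)
qed

text \<open>The common neighbour \<open>w\<close> has at most \<open>d\<close> neighbours in \<open>N(v) \<union> N(x)\<close>, a set of
  \<open>2d - |W|\<close> vertices, so it misses at least \<open>d - 1 - |W|\<close> of them.\<close>
lemma link_nondegree_le_card_non_neighbours_in:
  assumes sg: "simple_graph V E" and reg: "\<forall>u\<in>V. degree V E u = d"
    and v: "v \<in> V" and x: "x \<in> neighbours V E v"
  defines "W \<equiv> neighbours V E v \<inter> neighbours V E x"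
    and "A \<equiv> non_neighbours_in E (neighbours V E v) x"
    and "B \<equiv> non_neighbours_in E (neighbours V E x) v"
  assumes w: "w \<in> W"
  shows "link_nondegree V E v x
           \<le> card (non_neighbours_in E W w) + card (non_neighbours_in E A w)
             + card (non_neighbours_in E B w)"
proof -
  define S where "S = neighbours V E v \<union> neighbours V E x"
  have xV: "x \<in> V" and wV: "w \<in> V"
    using x w by (auto simp: W_def mem_neighbours_iff)
  have finS: "finite S" and SV: "S \<subseteq> V"
    using finite_neighbours[OF sg] by (auto simp: S_def neighbours_def)
  have "card S + card W = 2 * d"
    using card_Un_Int[of "neighbours V E v" "neighbours V E x"] finite_neighbours[OF sg] reg v xV
    by (simp add: S_def W_def degree_eq_card_neighbours)
  moreover have "card (S \<inter> neighbours V E w) \<le> d"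
    using reg wV finite_neighbours[OF sg, of w]
    by (metis Int_lower2 card_mono degree_eq_card_neighbours)
  moreover have "card (S \<inter> neighbours V E w) + card (non_neighbours_in E S w) = card S - 1"
    using card_neighbours_Int_add_non_neighbours_in[OF sg finS SV, of w] w finS
    by (simp add: S_def W_def)
  moreover have "d = Suc (card W + link_nondegree V E v x)"
    using card_neighbours_eq_Suc[OF sg x] reg v by (simp add: W_def degree_eq_card_neighbours)
  moreover have "card (non_neighbours_in E S w)
      \<le> card (non_neighbours_in E W w \<union> non_neighbours_in E A w \<union> non_neighbours_in E B w)"
    using non_neighbours_in_Un_neighbours_subset[of w V E v x] w
      finite_neighbours[OF sg, of v] finite_neighbours[OF sg, of x]
    by (intro card_mono) (auto simp: S_def W_def A_def B_def non_neighbours_in_def)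
  moreover have "card (non_neighbours_in E W w \<union> non_neighbours_in E A w \<union> non_neighbours_in E B w)
      \<le> card (non_neighbours_in E W w) + card (non_neighbours_in E A w)
        + card (non_neighbours_in E B w)"
    by (meson add_right_mono card_Un_le order_trans)
  ultimately show ?thesis
    by linarith
qed

lemma link_nondegree_mult_le:
  assumes sg: "simple_graph V E" and reg: "\<forall>u\<in>V. degree V E u = d"
    and sums: "\<forall>u\<in>V. (\<Sum>y\<in>neighbours V E u. link_nondegree V E u y) = M"
    and v: "v \<in> V" and x: "x \<in> neighbours V E v"
  shows "link_nondegree V E v x * (card (neighbours V E v \<inter> neighbours V E x) + 2) \<le> M"
proof -
  define k where "k = link_nondegree V E v x"
  define W where "W = neighbours V E v \<inter> neighbours V E x"
  define A where "A = non_neighbours_in E (neighbours V E v) x"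
  define B where "B = non_neighbours_in E (neighbours V E x) v"
  have xV: "x \<in> V" and vx: "v \<in> neighbours V E x"
    using x v by (auto simp: mem_neighbours_iff insert_commute)
  have "card A = k" "card B = k"
    using link_nondegree_sym[OF sg v x] reg v xV
    by (simp_all add: A_def B_def k_def link_nondegree_def)
  moreover have "2 * card A + (\<Sum>w\<in>W. card (non_neighbours_in E W w))
      + 2 * (\<Sum>w\<in>W. card (non_neighbours_in E A w)) \<le> M"
    using sum_link_nondegree_lower_bound[OF sg x] sums v by (simp add: W_def A_def)
  moreover have "2 * card B + (\<Sum>w\<in>W. card (non_neighbours_in E W w))
      + 2 * (\<Sum>w\<in>W. card (non_neighbours_in E B w)) \<le> M"
    using sum_link_nondegree_lower_bound[OF sg vx] sums xV by (simp add: W_def B_def Int_commute)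
  moreover have "k * card W \<le> (\<Sum>w\<in>W. card (non_neighbours_in E W w))
      + (\<Sum>w\<in>W. card (non_neighbours_in E A w)) + (\<Sum>w\<in>W. card (non_neighbours_in E B w))"
  proof -
    have "(\<Sum>w\<in>W. k) \<le> (\<Sum>w\<in>W. card (non_neighbours_in E W w)
        + card (non_neighbours_in E A w) + card (non_neighbours_in E B w))"
      using link_nondegree_le_card_non_neighbours_in[OF sg reg v x]
      by (intro sum_mono) (simp add: k_def W_def A_def B_def)
    then show ?thesis
      by (simp add: sum.distrib mult.commute)
  qed
  ultimately show ?thesis
    unfolding k_def[symmetric] W_def[symmetric] by (simp add: algebra_simps)
qed

lemma link_nondegree_le_one:
  assumes sg: "simple_graph V E" and reg: "\<forall>u\<in>V. degree V E u = d"
    and sums: "\<forall>u\<in>V. (\<Sum>y\<in>neighbours V E u. link_nondegree V E u y) = M"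
    and M: "M < 2 * (d - 1)"
    and v: "v \<in> V" and x: "x \<in> neighbours V E v"
  shows "link_nondegree V E v x \<le> 1"
proof (rule ccontr)
  define k where "k = link_nondegree V E v x"
  define c where "c = card (neighbours V E v \<inter> neighbours V E x)"
  assume "\<not> link_nondegree V E v x \<le> 1"
  then have "2 * c \<le> k * c"
    by (simp add: k_def)
  moreover have "k * (c + 2) \<le> M"
    using link_nondegree_mult_le[OF sg reg sums v x] by (simp add: k_def c_def)
  moreover have "d = Suc (c + k)"
    using card_neighbours_eq_Suc[OF sg x] reg v by (simp add: c_def k_def degree_eq_card_neighbours)
  moreover have "k * (c + 2) = k * c + 2 * k"
    by (simp add: algebra_simps)
  ultimately show False
    using M by linarith
qed

lemma neighbours_eq_if_link_nondegree_eq_0: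
  assumes sg: "simple_graph V E" and v: "v \<in> V" and y: "y \<in> neighbours V E v"
    and deg: "degree V E y = degree V E v" and zero: "link_nondegree V E v y = 0"
  shows "neighbours V E y = insert v (neighbours V E v - {y})"
proof (rule card_subset_eq[symmetric])
  show "finite (neighbours V E y)"
    using finite_neighbours[OF sg] .
  have "non_neighbours_in E (neighbours V E v) y = {}"
    using zero finite_neighbours[OF sg, of v]
    by (simp add: link_nondegree_def non_neighbours_in_def)
  then show "insert v (neighbours V E v - {y}) \<subseteq> neighbours V E y"
    using neighbours_sym[OF y v]
    by (auto simp: non_neighbours_in_def mem_neighbours_iff insert_commute)
  have "card (neighbours V E v) > 0"
    using y finite_neighbours[OF sg, of v] card_gt_0_iff by blast
  then show "card (insert v (neighbours V E v - {y})) = card (neighbours V E y)"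
    using y deg finite_neighbours[OF sg, of v] not_mem_neighbours_self[OF sg, of v]
    by (simp add: degree_eq_card_neighbours card_Suc_Diff1)
qed

text \<open>Otherwise the unique neighbour \<open>q\<close> of \<open>x\<close> that is not adjacent to \<open>v\<close> is
  not adjacent to \<open>y\<close> either, since \<open>y\<close> and \<open>v\<close> have the same closed neighbourhood;
  so \<open>q\<close> misses two neighbours of \<open>x\<close>.\<close>
lemma link_nondegree_pos_if_eq_1:
  assumes sg: "simple_graph V E" and reg: "\<forall>u\<in>V. degree V E u = d"
    and le_one: "\<forall>u\<in>V. \<forall>y\<in>neighbours V E u. link_nondegree V E u y \<le> 1"
    and v: "v \<in> V" and x: "x \<in> neighbours V E v" and y: "y \<in> neighbours V E v"
    and one: "link_nondegree V E v x = 1"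
  shows "link_nondegree V E v y > 0"
proof (rule ccontr)
  assume "\<not> link_nondegree V E v y > 0"
  then have zero: "link_nondegree V E v y = 0"
    by simp
  have xV: "x \<in> V" and vx: "v \<in> neighbours V E x"
    using x v by (auto simp: mem_neighbours_iff insert_commute)
  have "card (non_neighbours_in E (neighbours V E x) v) = 1"
    using link_nondegree_sym[OF sg v x] one reg v xV by (simp add: link_nondegree_def)
  then obtain q where "non_neighbours_in E (neighbours V E x) v = {q}"
    by (rule card_1_singletonE)
  then have qx: "q \<in> neighbours V E x" and "q \<noteq> v" and vq: "{v, q} \<notin> E"
    by (auto simp: non_neighbours_in_def)
  have q_notin: "q \<notin> neighbours V E v"
    using vq by (auto simp: mem_neighbours_iff insert_commute)
  have Ny: "neighbours V E y = insert v (neighbours V E v - {y})"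
    using neighbours_eq_if_link_nondegree_eq_0[OF sg v y _ zero] reg v y
    by (simp add: mem_neighbours_iff)
  have "x \<noteq> y"
    using one zero by auto
  then have yx: "y \<in> neighbours V E x"
    using Ny x y neighbours_sym[of x V E y] by (auto simp: mem_neighbours_iff)
  have "q \<notin> neighbours V E y"
    using Ny \<open>q \<noteq> v\<close> q_notin by auto
  then have "{v, y} \<subseteq> non_neighbours_in E (neighbours V E x) q"
    using vx yx \<open>q \<noteq> v\<close> vq y q_notin qx
    by (auto simp: non_neighbours_in_def mem_neighbours_iff insert_commute)
  then have "card {v, y} \<le> link_nondegree V E x q"
    using finite_neighbours[OF sg, of x]
    by (auto simp: link_nondegree_def non_neighbours_in_def intro: card_mono)
  moreover have "v \<noteq> y"
    using y not_mem_neighbours_self[OF sg, of v] by auto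
  ultimately show False
    using le_one xV qx by fastforce
qed

lemma link_nondegree_constant:
  assumes sg: "simple_graph V E" and reg: "\<forall>u\<in>V. degree V E u = d"
    and le_one: "\<forall>u\<in>V. \<forall>y\<in>neighbours V E u. link_nondegree V E u y \<le> 1"
    and v: "v \<in> V" and x: "x \<in> neighbours V E v" and y: "y \<in> neighbours V E v"
  shows "link_nondegree V E v x = link_nondegree V E v y"
proof -
  have "link_nondegree V E v x \<le> 1" "link_nondegree V E v y \<le> 1"
    using le_one v x y by auto
  then show ?thesis
    using link_nondegree_pos_if_eq_1[OF sg reg le_one v x y]
      link_nondegree_pos_if_eq_1[OF sg reg le_one v y x]
    by linarith
qed

lemma two_mult_choose_two: "2 * (n choose 2) = n * (n - 1)"
proof -
  have "even (n * (n - 1))"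
    by (cases "even n") auto
  then show ?thesis
    by (simp add: choose_two)
qed

lemma not_has_params_odd_between:
  assumes odd: "odd d" and lower: "(d - 1) choose 2 < r" and upper: "r < d choose 2"
    and "V \<noteq> {}"
  shows "\<not> has_params V E d r"
proof
  assume params: "has_params V E d r"
  then have sg: "simple_graph V E" and reg: "\<forall>u\<in>V. degree V E u = d"
    and K3: "\<forall>u\<in>V. K3_degree V E u = r"
    by (auto simp: has_params_def)
  define M where "M = d * (d - 1) - 2 * r"
  have step: "d choose 2 = (d - 1) + ((d - 1) choose 2)"
    using upper choose_reduce_nat[of d 2] by (cases "d = 0") auto
  then have M: "M = 2 * (d - 1) + 2 * ((d - 1) choose 2) - 2 * r"
    using two_mult_choose_two[of d] by (simp add: M_def)
  have M_pos: "0 < M" and M_less: "M < 2 * (d - 1)"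
    using M lower upper step by linarith+
  have "even M"
    using M by simp
  have sums: "\<forall>u\<in>V. (\<Sum>y\<in>neighbours V E u. link_nondegree V E u y) = M"
    using sum_link_nondegree_add_K3_degree[OF sg] reg K3 by (metis M_def add_diff_cancel_right')
  have le_one: "\<forall>u\<in>V. \<forall>y\<in>neighbours V E u. link_nondegree V E u y \<le> 1"
    using link_nondegree_le_one[OF sg reg sums M_less] by blast
  obtain v where v: "v \<in> V"
    using \<open>V \<noteq> {}\<close> by blast
  then have "neighbours V E v \<noteq> {}"
    using reg M_pos M_less by (auto simp: degree_eq_card_neighbours)
  then obtain x where x: "x \<in> neighbours V E v"
    by blast
  have "M = (\<Sum>y\<in>neighbours V E v. link_nondegree V E v x)"
    using sums v link_nondegree_constant[OF sg reg le_one v x] by simp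
  also have "\<dots> = d * link_nondegree V E v x"
    using reg v by (simp add: degree_eq_card_neighbours)
  finally have M_eq: "M = d * link_nondegree V E v x" .
  then have "link_nondegree V E v x = 1"
    using le_one v x M_pos by (metis le_neq_implies_less less_one mult_0_right not_gr0)
  then show False
    using M_eq \<open>even M\<close> odd by simp
qed

lemma doubleton_mem_complete_graph_E_iff:
  "{a, b} \<in> complete_graph_E n \<longleftrightarrow> a < n \<and> b < n \<and> a \<noteq> b"
  unfolding complete_graph_E_def by (auto simp: doubleton_eq_iff)

lemma mem_complete_graph_V_iff: "a \<in> complete_graph_V n \<longleftrightarrow> a < n"
  unfolding complete_graph_V_def by simp

lemma simple_graph_complete_graph: "simple_graph (complete_graph_V n) (complete_graph_E n)"
  unfolding simple_graph_def complete_graph_V_def complete_graph_E_def by auto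

lemma complete_graph_has_params:
  "has_params (complete_graph_V (n + 1)) (complete_graph_E (n + 1)) n (n choose 2)"
proof -
  let ?V = "complete_graph_V (n + 1)" and ?E = "complete_graph_E (n + 1)"
  have sg: "simple_graph ?V ?E"
    by (rule simple_graph_complete_graph)
  have N: "neighbours ?V ?E u = ?V - {u}" if "u \<in> ?V" for u
    using that by (auto simp: neighbours_def doubleton_mem_complete_graph_E_iff complete_graph_V_def)
  have deg: "degree ?V ?E u = n" if "u \<in> ?V" for u
    using N[OF that] that by (simp add: degree_eq_card_neighbours complete_graph_V_def)
  have "link_nondegree ?V ?E u y = 0" if "u \<in> ?V" "y \<in> neighbours ?V ?E u" for u y
    using N that
    by (auto simp: link_nondegree_def non_neighbours_in_def doubleton_mem_complete_graph_E_iff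
        complete_graph_V_def)
  then have "2 * K3_degree ?V ?E u = 2 * (n choose 2)" if "u \<in> ?V" for u
    using sum_link_nondegree_add_K3_degree[OF sg that] deg[OF that] that
    by (simp add: two_mult_choose_two)
  then show ?thesis
    using sg deg by (simp add: has_params_def)
qed

lemma doubleton_mem_cart_E_iff:
  "{(a, b), (c, e)} \<in> cart_E V1 E1 V2 E2
     \<longleftrightarrow> (a = c \<and> a \<in> V1 \<and> {b, e} \<in> E2) \<or> (b = e \<and> b \<in> V2 \<and> {a, c} \<in> E1)"
proof
  assume "{(a, b), (c, e)} \<in> cart_E V1 E1 V2 E2"
  then show "(a = c \<and> a \<in> V1 \<and> {b, e} \<in> E2) \<or> (b = e \<and> b \<in> V2 \<and> {a, c} \<in> E1)"
    unfolding cart_E_def by (auto simp: doubleton_eq_iff insert_commute)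
next
  assume "(a = c \<and> a \<in> V1 \<and> {b, e} \<in> E2) \<or> (b = e \<and> b \<in> V2 \<and> {a, c} \<in> E1)"
  then show "{(a, b), (c, e)} \<in> cart_E V1 E1 V2 E2"
    unfolding cart_E_def by blast
qed

lemma mem_cart_V_iff: "(a, b) \<in> cart_V V1 V2 \<longleftrightarrow> a \<in> V1 \<and> b \<in> V2"
  unfolding cart_V_def by simp

lemma simple_graph_cart:
  assumes "simple_graph V1 E1" "simple_graph V2 E2"
  shows "simple_graph (cart_V V1 V2) (cart_E V1 E1 V2 E2)"
proof -
  have "e \<subseteq> cart_V V1 V2 \<and> card e = 2" if "e \<in> cart_E V1 E1 V2 E2" for e
    using that simple_graph_edgeD[OF assms(1)] simple_graph_edgeD[OF assms(2)]
    by (auto simp: cart_E_def cart_V_def)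
  then show ?thesis
    using assms by (simp add: simple_graph_def cart_V_def)
qed

lemma doubleton_mem_complete_prism_E_iff:
  "{(a, b), (c, e)}
       \<in> cart_E (complete_graph_V r) (complete_graph_E r) (complete_graph_V 2) (complete_graph_E 2)
     \<longleftrightarrow> a < r \<and> c < r \<and> b < 2 \<and> e < 2 \<and> (a = c \<and> b \<noteq> e \<or> b = e \<and> a \<noteq> c)"
  by (auto simp: doubleton_mem_cart_E_iff doubleton_mem_complete_graph_E_iff complete_graph_V_def)

lemma neighbours_complete_prism:
  assumes "i < r" "j < 2"
  shows "neighbours (cart_V (complete_graph_V r) (complete_graph_V 2))
           (cart_E (complete_graph_V r) (complete_graph_E r) (complete_graph_V 2) (complete_graph_E 2))
           (i, j)
         = insert (i, 1 - j) ((\<lambda>k. (k, j)) ` ({0..<r} - {i}))" (is "?L = ?R")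
proof (rule set_eqI)
  fix z :: "nat \<times> nat"
  show "z \<in> ?L \<longleftrightarrow> z \<in> ?R"
    using assms by (cases z; cases "j = 0")
      (auto simp: mem_neighbours_iff doubleton_mem_complete_prism_E_iff mem_cart_V_iff
        mem_complete_graph_V_iff)
qed

lemma complete_prism_has_params:
  "has_params (cart_V (complete_graph_V r) (complete_graph_V 2))
     (cart_E (complete_graph_V r) (complete_graph_E r) (complete_graph_V 2) (complete_graph_E 2))
     r ((r - 1) choose 2)"
proof -
  let ?V = "cart_V (complete_graph_V r) (complete_graph_V 2)"
  let ?E = "cart_E (complete_graph_V r) (complete_graph_E r) (complete_graph_V 2) (complete_graph_E 2)"
  have sg: "simple_graph ?V ?E"
    by (intro simple_graph_cart simple_graph_complete_graph)
  have "degree ?V ?E p = r \<and> K3_degree ?V ?E p = (r - 1) choose 2" if pV: "p \<in> ?V" for p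
  proof -
    obtain i j where p: "p = (i, j)" and i: "i < r" and j: "j < 2"
      using pV by (cases p) (auto simp: mem_cart_V_iff mem_complete_graph_V_iff)
    define s where "s = (i, 1 - j)"
    define R where "R = (\<lambda>k. (k, j)) ` ({0..<r} - {i})"
    have N: "neighbours ?V ?E p = insert s R"
      using neighbours_complete_prism[OF i j] by (simp add: p s_def R_def)
    have s_notin: "s \<notin> R" and fin: "finite R"
      by (auto simp: s_def R_def)
    have card_R: "card R = r - 1"
      using i by (simp add: R_def card_image inj_on_def)
    have "non_neighbours_in ?E (insert s R) s = R"
      using j by (cases "j = 0") (auto simp: non_neighbours_in_def s_def R_def doubleton_mem_complete_prism_E_iff)
    moreover have "non_neighbours_in ?E (insert s R) y = {s}" if "y \<in> R" for y
      using that i j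
      by (cases "j = 0") (auto simp: non_neighbours_in_def s_def R_def doubleton_mem_complete_prism_E_iff)
    ultimately have "(\<Sum>y\<in>neighbours ?V ?E p. link_nondegree ?V ?E p y) = 2 * (r - 1)"
      using N s_notin fin card_R by (simp add: link_nondegree_def)
    moreover have "degree ?V ?E p = r"
      using N s_notin fin card_R i by (simp add: degree_eq_card_neighbours)
    ultimately have "2 * K3_degree ?V ?E p = 2 * ((r - 1) choose 2)"
      using sum_link_nondegree_add_K3_degree[OF sg pV] i two_mult_choose_two[of "r - 1"]
      by (cases r) (auto simp: algebra_simps)
    then show ?thesis
      using \<open>degree ?V ?E p = r\<close> by simp
  qed
  then show ?thesis
    using sg by (simp add: has_params_def)
qed

theorem corollary5p2:
  fixes r2 :: nat
  assumes "r2 \<ge> 3" and "odd r2"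
  shows "(\<forall>(V :: 'a set) E (r3 :: nat). (r2 - 1) choose 2 < r3 \<and> r3 < r2 choose 2
            \<and> V \<noteq> {} \<longrightarrow> \<not> has_params V E r2 r3)
       \<and> has_params (complete_graph_V (r2 + 1)) (complete_graph_E (r2 + 1)) r2 (r2 choose 2)
       \<and> has_params (cart_V (complete_graph_V r2) (complete_graph_V 2))
                    (cart_E (complete_graph_V r2) (complete_graph_E r2)
                            (complete_graph_V 2) (complete_graph_E 2))
                    r2 ((r2 - 1) choose 2)"
proof -
  have "\<not> has_params V E r2 r3"
    if "(r2 - 1) choose 2 < r3" "r3 < r2 choose 2" "V \<noteq> {}" for V :: "'a set" and E r3
    using not_has_params_odd_between[OF \<open>odd r2\<close> that] .
  then show ?thesis
    using complete_graph_has_params[of r2] complete_prism_has_params[of r2] by simp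
qed

end
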